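(* There is no nontrivial valued Abelian group of exponent $3$ which, with the metric $(x,y)\mapsto p(x-y)$ induced by its value $p$, is Urysohn as a metric space.
   Context: A value on an Abelian group $G$ is $p\colon G\to[0,\infty)$ with $p(x)=0\iff x=0$, $p(-x)=p(x)$, $p(x+y)\leqslant p(x)+p(y)$. A group has exponent $3$ if $3x=0$ for all $x$. A metric space $X$ is Urysohn if (U0) it is separable and complete, (U1) every separable metric space of diameter no greater than $\mathrm{diam}\,X$ isometrically embeds into $X$, and (U2) every isometry between two finite subsets of $X$ extends to an isometry of $X$ onto $X$. *)

theory Defs
  imports "HOL-Analysis.Analysis"
begin

definition group_value :: "('a::ab_group_add \<Rightarrow> real) \<Rightarrow> bool" where
  "group_value p \<longleftrightarrow>
     (\<forall>x. 0 \<le> p x) \<and> (\<forall>x. p x = 0 \<longleftrightarrow> x = 0) \<and> (\<forall>x. p (- x) = p x) \<and>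
     (\<forall>x y. p (x + y) \<le> p x + p y)"

definition exponent3 :: "'a::ab_group_add itself \<Rightarrow> bool" where
  "exponent3 _ \<longleftrightarrow> (\<forall>x::'a. x + x + x = 0)"

text \<open>Diameter (in the extended reals, so unbounded spaces have diameter infinity).\<close>
definition mdiam :: "'a set \<Rightarrow> ('a \<Rightarrow> 'a \<Rightarrow> real) \<Rightarrow> ereal" where
  "mdiam M d = (SUP z \<in> M \<times> M. ereal (d (fst z) (snd z)))"

definition isometric_on :: "'a set \<Rightarrow> ('a \<Rightarrow> 'a \<Rightarrow> real) \<Rightarrow> ('b \<Rightarrow> 'b \<Rightarrow> real) \<Rightarrow> ('a \<Rightarrow> 'b) \<Rightarrow> bool" where
  "isometric_on S dS d f \<longleftrightarrow> (\<forall>x\<in>S. \<forall>y\<in>S. d (f x) (f y) = dS x y)"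

text \<open>Every separable metric space has cardinality at most
  the continuum, hence is isometric to a metric space whose carrier is a set of reals;
  condition (U1) therefore quantifies over metric spaces carried by subsets of \<real>.\<close>
definition urysohn :: "'a set \<Rightarrow> ('a \<Rightarrow> 'a \<Rightarrow> real) \<Rightarrow> bool" where
  "urysohn M d \<longleftrightarrow>
     Metric_space M d \<and>
     separable_space (Metric_space.mtopology M d) \<and> Metric_space.mcomplete M d \<and>
     (\<forall>(S::real set) dS. Metric_space S dS \<and> separable_space (Metric_space.mtopology S dS) \<and>
        mdiam S dS \<le> mdiam M d \<longrightarrow> (\<exists>f. f ` S \<subseteq> M \<and> isometric_on S dS d f)) \<and>
     (\<forall>A B f. finite A \<and> A \<subseteq> M \<and> B \<subseteq> M \<and> bij_betw f A B \<and> isometric_on A d d f \<longrightarrow>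
        (\<exists>g. bij_betw g M M \<and> isometric_on M d d g \<and> (\<forall>x\<in>A. g x = f x)))"

end

theory Submission
  imports Defs
begin

text \<open>In a group of exponent 3 we have \<open>x + y = (x - y) - y\<close>, so \<open>p (x + y) \<le> p (x - y) + p y\<close>:
  a point at distance \<open>r/2\<close> from both \<open>0\<close> and \<open>x\<close> lies within \<open>r\<close> of \<open>-x\<close>.  If \<open>p x = r\<close>,
  the points \<open>0, x, -x\<close> form an equilateral triangle of side \<open>r\<close>.  A Urysohn space contains
  an equilateral triangle of side \<open>r\<close> together with a point at distances \<open>r/2, r/2, 3r/2\<close>
  from its vertices (U1), and by ultrahomogeneity (U2) every such triangle can be moved
  onto \<open>{0, x, -x}\<close>, which is impossible.\<close>

lemma countable_imp_separable_space:
  assumes "countable (topspace X)"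
  shows "separable_space X"
  unfolding separable_space_def using assms closure_of_topspace[of X] by (intro exI[of _ "topspace X"]) simp

lemma mdiam_le:
  assumes "\<And>x y. x \<in> M \<Longrightarrow> y \<in> M \<Longrightarrow> d x y \<le> c"
  shows "mdiam M d \<le> ereal c"
  unfolding mdiam_def by (rule SUP_least) (use assms in auto)

lemma mdiam_ge:
  assumes "x \<in> M" "y \<in> M"
  shows "ereal (d x y) \<le> mdiam M d"
  unfolding mdiam_def using assms SUP_upper[of "(x, y)" "M \<times> M" "\<lambda>z. ereal (d (fst z) (snd z))"]
  by simp

lemma urysohn_embeds:
  fixes S :: "real set"
  assumes "urysohn M d" "Metric_space S dS" "separable_space (Metric_space.mtopology S dS)"
    and "mdiam S dS \<le> mdiam M d"
  obtains f where "f ` S \<subseteq> M" "isometric_on S dS d f"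
proof -
  have "\<forall>(S::real set) dS. Metric_space S dS \<and> separable_space (Metric_space.mtopology S dS) \<and>
      mdiam S dS \<le> mdiam M d \<longrightarrow> (\<exists>f. f ` S \<subseteq> M \<and> isometric_on S dS d f)"
    using assms(1) unfolding urysohn_def by (elim conjE)
  then show ?thesis
    using assms(2-4) that by blast
qed

lemma urysohn_extends_isometry:
  assumes "urysohn M d" "finite A" "A \<subseteq> M" "B \<subseteq> M" "bij_betw f A B" "isometric_on A d d f"
  obtains g where "bij_betw g M M" "isometric_on M d d g" "\<And>x. x \<in> A \<Longrightarrow> g x = f x"
proof -
  have "\<forall>A B f. finite A \<and> A \<subseteq> M \<and> B \<subseteq> M \<and> bij_betw f A B \<and> isometric_on A d d f \<longrightarrow>
      (\<exists>g. bij_betw g M M \<and> isometric_on M d d g \<and> (\<forall>x\<in>A. g x = f x))"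
    using assms(1) unfolding urysohn_def by (elim conjE)
  then have "\<exists>g. bij_betw g M M \<and> isometric_on M d d g \<and> (\<forall>x\<in>A. g x = f x)"
    using assms(2-6) by simp
  then show ?thesis
    using that by blast
qed

lemma exponent3_double:
  fixes x :: "'a::ab_group_add"
  assumes "exponent3 TYPE('a)"
  shows "x + x = - x"
  using assms unfolding exponent3_def by (simp add: eq_neg_iff_add_eq_0)

lemma exponent3_neg_eq_iff:
  fixes x :: "'a::ab_group_add"
  assumes "exponent3 TYPE('a)"
  shows "- x = x \<longleftrightarrow> x = 0"
  using exponent3_double[OF assms, of x] by (metis add.inverse_neutral add_cancel_right_right)

lemma exponent3_value_add_le:
  fixes p :: "'a::ab_group_add \<Rightarrow> real"
  assumes "group_value p" "exponent3 TYPE('a)"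
  shows "p (x + y) \<le> p (x - y) + p y"
proof -
  have "x + y = (x - y) + (y + y)"
    by (simp add: algebra_simps)
  also have "y + y = - y"
    by (rule exponent3_double[OF assms(2)])
  finally have "x + y = (x - y) + - y" .
  then show ?thesis
    using assms(1) unfolding group_value_def by (metis (no_types))
qed

lemma value_diff_commute:
  assumes "group_value p"
  shows "p (x - y) = p (y - x)"
  using assms unfolding group_value_def by (metis minus_diff_eq)

lemma urysohn_move_equilateral_triangle:
  fixes p :: "'a::ab_group_add \<Rightarrow> real"
  defines "d \<equiv> \<lambda>x y. p (x - y)"
  assumes p: "group_value p" and e3: "exponent3 TYPE('a)" and U: "urysohn UNIV d"
    and r: "r > 0" and sides: "p (b - a) = r" "p (c - a) = r" "p (c - b) = r"
  obtains g where "isometric_on UNIV d d g" "g a = 0" "g b = b - a" "g c = a - b"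
proof -
  define x where "x = b - a"
  define h where "h w = (if w = a then 0 else if w = b then x else - x)" for w
  have zero: "p u = 0 \<longleftrightarrow> u = 0" and sym: "p (- u) = p u" for u
    using p unfolding group_value_def by auto
  have "a \<noteq> b" "a \<noteq> c" "b \<noteq> c"
    using sides r zero by force+
  have "x \<noteq> 0"
    using sides(1) r zero unfolding x_def by force
  then have "- x \<noteq> x"
    using exponent3_neg_eq_iff[OF e3] by blast
  have "p (x - - x) = p (- x)"
    using exponent3_double[OF e3, of x] by simp
  also have "\<dots> = r"
    using sym[of x] sides(1) x_def by simp
  finally have "p (x - - x) = r" .
  have "p x = r" "p (- x) = r" "p (- x - x) = r"
    using sym[of x] sym[of "x - - x"] sides(1) \<open>p (x - - x) = r\<close> x_def by simp_all
  moreover have "p (a - b) = r" "p (a - c) = r" "p (b - c) = r"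
    using sides value_diff_commute[OF p] by metis+
  ultimately have "isometric_on {a, b, c} d d h"
    using \<open>a \<noteq> b\<close> \<open>a \<noteq> c\<close> \<open>b \<noteq> c\<close> sides \<open>p (x - - x) = r\<close>
    unfolding isometric_on_def d_def h_def by (simp add: x_def[symmetric])
  moreover have "bij_betw h {a, b, c} {0, x, - x}"
    using \<open>a \<noteq> b\<close> \<open>a \<noteq> c\<close> \<open>b \<noteq> c\<close> \<open>x \<noteq> 0\<close> \<open>- x \<noteq> x\<close>
    unfolding bij_betw_def inj_on_def h_def by auto
  ultimately obtain g where "isometric_on UNIV d d g" "\<And>w. w \<in> {a, b, c} \<Longrightarrow> g w = h w"
    using urysohn_extends_isometry[OF U, of "{a, b, c}" "{0, x, - x}" h] by blast
  with that show ?thesis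
    using \<open>a \<noteq> b\<close> \<open>a \<noteq> c\<close> \<open>b \<noteq> c\<close> unfolding h_def x_def by simp
qed

definition four_point_metric :: "real \<Rightarrow> real \<Rightarrow> real \<Rightarrow> real" where
  "four_point_metric r a b =
     (if a = b then 0
      else if {a, b} = {2, 3} then 3 * r / 2
      else if a = 3 \<or> b = 3 then r / 2
      else r)"

lemma four_point_metric_space:
  assumes "r > 0"
  shows "Metric_space {0, 1, 2, 3} (four_point_metric r)"
  unfolding Metric_space_def four_point_metric_def using assms by (auto simp: doubleton_eq_iff)

lemma four_point_metric_separable:
  assumes "r > 0"
  shows "separable_space (Metric_space.mtopology {0, 1, 2, 3} (four_point_metric r))"
  by (simp add: countable_imp_separable_space Metric_space.topspace_mtopology
      four_point_metric_space[OF assms])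

lemma four_point_metric_mdiam:
  assumes "r > 0"
  shows "mdiam {0, 1, 2, 3} (four_point_metric r) \<le> ereal (3 * r / 2)"
  by (rule mdiam_le) (use assms in \<open>auto simp: four_point_metric_def\<close>)

lemma urysohn_four_points:
  assumes "urysohn M d" "r > 0" "ereal (3 * r / 2) \<le> mdiam M d"
  obtains a b c e where "d b a = r" "d c a = r" "d c b = r"
    and "d e a = r / 2" "d e b = r / 2" "d e c = 3 * r / 2"
proof -
  have "mdiam {0, 1, 2, 3} (four_point_metric r) \<le> mdiam M d"
    using four_point_metric_mdiam[OF assms(2)] assms(3) by (rule order_trans)
  then obtain f where "isometric_on {0, 1, 2, 3} (four_point_metric r) d f"
    using urysohn_embeds[OF assms(1) four_point_metric_space four_point_metric_separable] assms(2)
    by metis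
  then show ?thesis
    using that[of "f 0" "f 1" "f 2" "f 3"] unfolding isometric_on_def
    by (simp add: four_point_metric_def doubleton_eq_iff)
qed

theorem proposition2p18:
  fixes p :: "'a::ab_group_add \<Rightarrow> real"
  assumes "group_value p"
    and "exponent3 TYPE('a)"
    and "\<exists>x::'a. x \<noteq> 0"
  shows "\<not> urysohn (UNIV::'a set) (\<lambda>x y. p (x - y))"
proof
  let ?d = "\<lambda>x y. p (x - y)"
  assume U: "urysohn (UNIV::'a set) ?d"
  obtain x0 :: 'a where "x0 \<noteq> 0"
    using assms(3) by auto
  define r where "r = p x0 / 2"
  have "r > 0"
    using \<open>x0 \<noteq> 0\<close> assms(1) unfolding r_def group_value_def by (metis less_eq_real_def half_gt_zero)
  moreover have "ereal (3 * r / 2) \<le> mdiam UNIV ?d"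
    using order_trans[OF _ mdiam_ge[of x0 UNIV 0 ?d]] \<open>r > 0\<close> unfolding r_def by simp
  ultimately obtain a b c e where sides: "p (b - a) = r" "p (c - a) = r" "p (c - b) = r"
    and "p (e - a) = r / 2" "p (e - b) = r / 2" "p (e - c) = 3 * r / 2"
    by (rule urysohn_four_points[OF U])
  moreover obtain g where "isometric_on UNIV ?d ?d g" and "g a = 0" "g b = b - a" "g c = a - b"
    using urysohn_move_equilateral_triangle[OF assms(1,2) U \<open>r > 0\<close> sides] .
  then have "p (g u - g v) = p (u - v)" for u v
    unfolding isometric_on_def by simp
  ultimately have "p (g e) = r / 2" "p ((b - a) - g e) = r / 2" "p ((b - a) + g e) = 3 * r / 2"
    using value_diff_commute[OF assms(1)] \<open>g a = 0\<close> \<open>g b = b - a\<close> \<open>g c = a - b\<close>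
    by (metis diff_zero, metis, metis add.commute minus_diff_eq diff_minus_eq_add)
  then show False
    using exponent3_value_add_le[OF assms(1,2), of "b - a" "g e"] \<open>r > 0\<close> by simp
qed

end
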